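(* Let $X$ be a $T_1$ space with countable extent and $|X|<\mathfrak{b}$. Then $X$ is absolutely strongly star-Menger if and only if $X$ is selectively $(a)$.
   Context: All spaces are regular. $St(A,\mathcal{U})=\bigcup\{U\in\mathcal{U}:U\cap A\neq\emptyset\}$. $\mathfrak{b}$ is the bounding number. $X$ has countable extent if every closed discrete subset is countable. $X$ is absolutely strongly star-Menger if for every sequence $(\mathcal{U}_n:n\in\omega)$ of open covers and every dense $D\subseteq X$ there are finite $F_n\subseteq D$ with $\{St(F_n,\mathcal{U}_n):n\in\omega\}$ covering $X$. $X$ is selectively $(a)$ if for every sequence $(\mathcal{U}_n)$ of open covers and every dense $D\subseteq X$ there are $C_n\subseteq D$, closed and discrete in $X$, with $\{St(C_n,\mathcal{U}_n):n\in\omega\}$ covering $X$. *)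

theory Defs
  imports "HOL-Analysis.Analysis"
begin

definition star_of :: "'a set \<Rightarrow> 'a set set \<Rightarrow> 'a set" where
  "star_of A \<U> = \<Union>{U \<in> \<U>. U \<inter> A \<noteq> {}}"

definition open_cover :: "'a topology \<Rightarrow> 'a set set \<Rightarrow> bool" where
  "open_cover X \<U> \<longleftrightarrow> (\<forall>U\<in>\<U>. openin X U) \<and> topspace X \<subseteq> \<Union>\<U>"

definition dense_in :: "'a topology \<Rightarrow> 'a set \<Rightarrow> bool" where
  "dense_in X D \<longleftrightarrow> D \<subseteq> topspace X \<and> X closure_of D = topspace X"

definition closed_discrete :: "'a topology \<Rightarrow> 'a set \<Rightarrow> bool" where
  "closed_discrete X C \<longleftrightarrow> closedin X C \<and> subtopology X C = discrete_topology C"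

definition countable_extent :: "'a topology \<Rightarrow> bool" where
  "countable_extent X \<longleftrightarrow> (\<forall>C. closed_discrete X C \<longrightarrow> countable C)"

definition abs_strongly_star_Menger :: "'a topology \<Rightarrow> bool" where
  "abs_strongly_star_Menger X \<longleftrightarrow>
    (\<forall>\<U> :: nat \<Rightarrow> 'a set set. \<forall>D. (\<forall>n. open_cover X (\<U> n)) \<and> dense_in X D \<longrightarrow>
       (\<exists>F :: nat \<Rightarrow> 'a set. (\<forall>n. finite (F n) \<and> F n \<subseteq> D) \<and>
          topspace X \<subseteq> (\<Union>n. star_of (F n) (\<U> n))))"

definition selectively_a :: "'a topology \<Rightarrow> bool" where
  "selectively_a X \<longleftrightarrow>
    (\<forall>\<U> :: nat \<Rightarrow> 'a set set. \<forall>D. (\<forall>n. open_cover X (\<U> n)) \<and> dense_in X D \<longrightarrow>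
       (\<exists>C :: nat \<Rightarrow> 'a set. (\<forall>n. C n \<subseteq> D \<and> closed_discrete X (C n)) \<and>
          topspace X \<subseteq> (\<Union>n. star_of (C n) (\<U> n))))"

definition eventually_le :: "(nat \<Rightarrow> nat) \<Rightarrow> (nat \<Rightarrow> nat) \<Rightarrow> bool" where
  "eventually_le f g \<longleftrightarrow> finite {n. g n < f n}"

definition unbounded_family :: "(nat \<Rightarrow> nat) set \<Rightarrow> bool" where
  "unbounded_family F \<longleftrightarrow> \<not> (\<exists>g. \<forall>f\<in>F. eventually_le f g)"

text \<open>|A| < b: the cardinality of A is strictly below that of every unbounded family.\<close>
definition card_less_bounding :: "'a set \<Rightarrow> bool" where
  "card_less_bounding A \<longleftrightarrow>
    (\<forall>F. unbounded_family F \<longrightarrow> (card_of A, card_of F) \<in> ordLess)"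

end

theory Submission
  imports Defs
begin

text \<open>Finite sets are closed and discrete in a \<open>T\<^sub>1\<close> space, so one direction is immediate.
  Conversely, splitting the sequence of covers into infinitely many subsequences, selectively
  \<open>(a)\<close> yields closed discrete sets \<open>C\<^sub>n \<subseteq> D\<close>, countable by countable extent, such that every
  point lies in \<open>St(C\<^sub>n, \<U>\<^sub>n)\<close> for infinitely many \<open>n\<close>. Enumerating each \<open>C\<^sub>n\<close>, every point
  \<open>x\<close> determines a function \<open>n \<mapsto>\<close> (first index of an element of \<open>C\<^sub>n\<close> whose star
  contains \<open>x\<close>). Fewer than \<open>\<frak>b\<close> such functions are dominated by a single \<open>g\<close>, and the
  first \<open>g n + 1\<close> elements of \<open>C\<^sub>n\<close> are the required finite sets.\<close>

lemma star_of_mono: "A \<subseteq> B \<Longrightarrow> star_of A \<U> \<subseteq> star_of B \<U>"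
  unfolding star_of_def by blast

lemma star_of_countable_enum:
  assumes "countable C" "x \<in> star_of C \<U>"
  shows "\<exists>m. x \<in> star_of {from_nat_into C m} \<U>"
proof -
  obtain V c where "V \<in> \<U>" "c \<in> V" "c \<in> C" "x \<in> V"
    using assms(2) unfolding star_of_def by blast
  moreover obtain m where "c = from_nat_into C m"
    using assms(1) \<open>c \<in> C\<close> from_nat_into_surj by metis
  ultimately show ?thesis unfolding star_of_def by blast
qed

lemma t1_space_finite_imp_closed_discrete:
  assumes "t1_space X" "finite F" "F \<subseteq> topspace X"
  shows "closed_discrete X F"
proof -
  have "closedin X F" using assms t1_space_closedin_finite by blast
  moreover have "subtopology X F = discrete_topology F"
    by (rule finite_t1_space_imp_discrete_topology)
       (use assms t1_space_subtopology in auto)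
  ultimately show ?thesis unfolding closed_discrete_def by blast
qed

lemma abs_strongly_star_Menger_imp_selectively_a:
  assumes "t1_space X" "abs_strongly_star_Menger X"
  shows "selectively_a X"
  unfolding selectively_a_def
proof (intro allI impI)
  fix \<U> :: "nat \<Rightarrow> 'a set set" and D
  assume covers: "(\<forall>n. open_cover X (\<U> n)) \<and> dense_in X D"
  then obtain F where F: "\<And>n. finite (F n) \<and> F n \<subseteq> D"
    and cover: "topspace X \<subseteq> (\<Union>n. star_of (F n) (\<U> n))"
    using assms(2)[unfolded abs_strongly_star_Menger_def, rule_format, OF covers] by blast
  have "D \<subseteq> topspace X" using covers unfolding dense_in_def by blast
  then have "F n \<subseteq> D \<and> closed_discrete X (F n)" for n
    using F assms(1) t1_space_finite_imp_closed_discrete by blast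
  with cover show "\<exists>C. (\<forall>n. C n \<subseteq> D \<and> closed_discrete X (C n)) \<and>
      topspace X \<subseteq> (\<Union>n. star_of (C n) (\<U> n))"
    by blast
qed

lemma selectively_a_imp_frequent_selection:
  assumes "selectively_a X" "\<And>n. open_cover X (\<U> n)" "dense_in X D"
  obtains C where "\<And>n. C n \<subseteq> D \<and> closed_discrete X (C n)"
    and "\<And>x. x \<in> topspace X \<Longrightarrow> \<exists>\<^sub>F n in sequentially. x \<in> star_of (C n) (\<U> n)"
proof -
  have "\<forall>k. \<exists>Ck. (\<forall>j. Ck j \<subseteq> D \<and> closed_discrete X (Ck j)) \<and>
      topspace X \<subseteq> (\<Union>j. star_of (Ck j) (\<U> (prod_encode (k, j))))"
    using assms(1)[unfolded selectively_a_def, rule_format, of "\<lambda>j. \<U> (prod_encode (k, j))" D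
        for k]
      assms(2,3) by blast
  then obtain CC where "\<forall>k. (\<forall>j. CC k j \<subseteq> D \<and> closed_discrete X (CC k j)) \<and>
      topspace X \<subseteq> (\<Union>j. star_of (CC k j) (\<U> (prod_encode (k, j))))"
    by (erule choice[THEN exE])
  then have CC: "\<And>k j. CC k j \<subseteq> D \<and> closed_discrete X (CC k j)"
    and CC_cover: "\<And>k. topspace X \<subseteq> (\<Union>j. star_of (CC k j) (\<U> (prod_encode (k, j))))"
    by blast+
  define C where "C n = case_prod CC (prod_decode n)" for n
  have C_encode: "C (prod_encode (k, j)) = CC k j" for k j
    unfolding C_def by simp
  have "\<exists>\<^sub>F n in sequentially. x \<in> star_of (C n) (\<U> n)" if x: "x \<in> topspace X" for x
    unfolding frequently_sequentially
  proof
    fix k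
    obtain j where "x \<in> star_of (CC k j) (\<U> (prod_encode (k, j)))"
      using CC_cover[of k] x by blast
    then show "\<exists>n\<ge>k. x \<in> star_of (C n) (\<U> n)"
      using le_prod_encode_1[of k j] C_encode by metis
  qed
  moreover have "C n \<subseteq> D \<and> closed_discrete X (C n)" for n
    unfolding C_def using CC by (simp add: case_prod_beta)
  ultimately show ?thesis using that by blast
qed

lemma card_less_bounding_imp_dominated:
  fixes f :: "'a \<Rightarrow> nat \<Rightarrow> nat"
  assumes "card_less_bounding A"
  shows "\<exists>g. \<forall>x\<in>A. \<forall>\<^sub>F n in sequentially. f x n \<le> g n"
proof -
  have "\<not> unbounded_family (f ` A)"
  proof
    assume "unbounded_family (f ` A)"
    then have "(card_of A, card_of (f ` A)) \<in> ordLess"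
      using assms unfolding card_less_bounding_def by blast
    then show False using card_of_image not_ordLess_ordLeq by blast
  qed
  then obtain g where "\<And>x. x \<in> A \<Longrightarrow> finite {n. g n < f x n}"
    unfolding unbounded_family_def eventually_le_def by blast
  then have "\<forall>x\<in>A. \<forall>\<^sub>F n in sequentially. f x n \<le> g n"
    by (simp add: cofinite_eq_sequentially[symmetric] eventually_cofinite not_le)
  then show ?thesis by blast
qed

lemma frequent_countable_selection_imp_finite_selection:
  fixes C :: "nat \<Rightarrow> 'a set"
  assumes countable: "\<And>n. countable (C n)"
    and frequent: "\<And>x. x \<in> S \<Longrightarrow> \<exists>\<^sub>F n in sequentially. x \<in> star_of (C n) (\<U> n)"
    and dominated: "\<And>f :: 'a \<Rightarrow> nat \<Rightarrow> nat.
      \<exists>g. \<forall>x\<in>S. \<forall>\<^sub>F n in sequentially. f x n \<le> g n"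
  shows "\<exists>F. (\<forall>n. finite (F n) \<and> F n \<subseteq> C n) \<and> S \<subseteq> (\<Union>n. star_of (F n) (\<U> n))"
proof -
  define e where "e n = from_nat_into (C n)" for n
  define first where "first x n = (LEAST m. x \<in> star_of {e n m} (\<U> n))" for x n
  obtain g where g: "\<And>x. x \<in> S \<Longrightarrow> \<forall>\<^sub>F n in sequentially. first x n \<le> g n"
    using dominated[of first] by blast
  \<comment> \<open>\<open>from_nat_into {}\<close> is an arbitrary value, hence the case split.\<close>
  define F where "F n = (if C n = {} then {} else e n ` {..g n})" for n
  have "finite (F n) \<and> F n \<subseteq> C n" for n
    by (cases "C n = {}") (simp_all add: F_def e_def image_subset_iff from_nat_into)
  moreover have "x \<in> (\<Union>n. star_of (F n) (\<U> n))" if "x \<in> S" for x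
  proof -
    have "\<forall>\<^sub>F n in sequentially.
        x \<in> star_of (C n) (\<U> n) \<longrightarrow> x \<in> star_of (C n) (\<U> n) \<and> first x n \<le> g n"
      using g[OF that] by (rule eventually_mono) simp
    with frequent[OF that]
    have "\<exists>\<^sub>F n in sequentially. x \<in> star_of (C n) (\<U> n) \<and> first x n \<le> g n"
      by (rule frequently_rev_mp)
    then obtain n where star: "x \<in> star_of (C n) (\<U> n)" and le: "first x n \<le> g n"
      using frequently_ex by blast
    have "C n \<noteq> {}" using star unfolding star_of_def by blast
    have first: "x \<in> star_of {e n (first x n)} (\<U> n)"
      using star_of_countable_enum[OF countable star] unfolding first_def e_def by (rule LeastI_ex)
    have "{e n (first x n)} \<subseteq> F n"
      using le \<open>C n \<noteq> {}\<close> unfolding F_def by simp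
    then have "x \<in> star_of (F n) (\<U> n)"
      using first star_of_mono by blast
    then show ?thesis by (rule UN_I[rotated]) simp
  qed
  ultimately show ?thesis by (intro exI[of _ F] conjI allI subsetI) blast+
qed

lemma selectively_a_imp_abs_strongly_star_Menger:
  assumes "countable_extent X" "card_less_bounding (topspace X)" "selectively_a X"
  shows "abs_strongly_star_Menger X"
  unfolding abs_strongly_star_Menger_def
proof (intro allI impI)
  fix \<U> :: "nat \<Rightarrow> 'a set set" and D
  assume "(\<forall>n. open_cover X (\<U> n)) \<and> dense_in X D"
  then obtain C where C: "\<And>n. C n \<subseteq> D \<and> closed_discrete X (C n)"
    and frequent: "\<And>x. x \<in> topspace X \<Longrightarrow> \<exists>\<^sub>F n in sequentially. x \<in> star_of (C n) (\<U> n)"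
    using selectively_a_imp_frequent_selection[OF assms(3)] by blast
  have countable: "countable (C n)" for n
    using C assms(1) unfolding countable_extent_def by blast
  have dominated: "\<exists>g. \<forall>x\<in>topspace X. \<forall>\<^sub>F n in sequentially. f x n \<le> g n"
    for f :: "'a \<Rightarrow> nat \<Rightarrow> nat"
    by (rule card_less_bounding_imp_dominated[OF assms(2)])
  obtain F where F: "\<forall>n. finite (F n) \<and> F n \<subseteq> C n"
    and cover: "topspace X \<subseteq> (\<Union>n. star_of (F n) (\<U> n))"
    using frequent_countable_selection_imp_finite_selection[OF countable frequent dominated]
    by blast
  have "finite (F n) \<and> F n \<subseteq> D" for n
    using F C by blast
  with cover show "\<exists>F. (\<forall>n. finite (F n) \<and> F n \<subseteq> D) \<and>
      topspace X \<subseteq> (\<Union>n. star_of (F n) (\<U> n))"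
    by blast
qed

theorem mainTheorem18:
  fixes X :: "'a topology"
  assumes "regular_space X"
    and "t1_space X"
    and "countable_extent X"
    and "card_less_bounding (topspace X)"
  shows "abs_strongly_star_Menger X \<longleftrightarrow> selectively_a X"
  using abs_strongly_star_Menger_imp_selectively_a[OF assms(2)]
    selectively_a_imp_abs_strongly_star_Menger[OF assms(3,4)] by blast

end
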